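(* Let $d\ge1$, let $n$ be a positive integer, and let $X\subseteq\mathbb{R}^d$ be a bounded set contained in a unimodular copy of $n\cdot\Delta_d$. Then $\mathrm{Flt}_d(X)\le 2nd\cdot\mathrm{Flt}(d)$ and $\mathrm{Flt}^{\mathbb{R}}_d(X)\le nd\cdot\mathrm{Flt}(d)$.
   Context: Convex body: non-empty compact convex subset of $\mathbb{R}^d$; $\mathrm{width}(K)=\min_{u\in(\mathbb{Z}^d)^*\setminus\{0\}}\max_{x,y\in K}|u(x)-u(y)|$; $\mathrm{Flt}(d)=\sup\{\mathrm{width}(K): K \text{ convex body}, K\cap\mathbb{Z}^d=\emptyset\}$. A unimodular (resp. $\mathbb{R}$-unimodular) copy of $Y\subseteq\mathbb{R}^d$ is $\{Ay+b:y\in Y\}$ with $A\in\mathrm{GL}(d,\mathbb{Z})$ and $b\in\mathbb{Z}^d$ (resp. $b\in\mathbb{R}^d$). $\Delta_d=\mathrm{conv}(0,e_1,\dots,e_d)$. For bounded $X\subseteq\mathbb{R}^d$: $\mathrm{Flt}_d(X)=\sup\{\mathrm{width}(K): K\text{ convex body not containing a unimodular copy of }X\}$ and $\mathrm{Flt}^{\mathbb{R}}_d(X)=\sup\{\mathrm{width}(K): K\text{ convex body not containing an }\mathbb{R}\text{-unimodular copy of }X\}$. *)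

theory Defs
  imports "HOL-Analysis.Analysis"
begin

definition int_vec :: "real^'n \<Rightarrow> bool" where
  "int_vec x \<longleftrightarrow> (\<forall>i. x $ i \<in> \<int>)"

definition unimodular_matrix :: "real^'n^'n \<Rightarrow> bool" where
  "unimodular_matrix A \<longleftrightarrow> (\<forall>i j. A $ i $ j \<in> \<int>) \<and> (det A = 1 \<or> det A = -1)"

definition convex_body :: "(real^'n) set \<Rightarrow> bool" where
  "convex_body K \<longleftrightarrow> K \<noteq> {} \<and> compact K \<and> convex K"

text \<open>Lattice width: dual lattice vectors are identified with integer vectors u,
  acting by the inner product.\<close>
definition lattice_width :: "(real^'n) set \<Rightarrow> real" where
  "lattice_width K = Inf {Sup {\<bar>u \<bullet> x - u \<bullet> y\<bar> | x y. x \<in> K \<and> y \<in> K} | u. int_vec u \<and> u \<noteq> 0}"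

definition unimodular_copy :: "(real^'n) set \<Rightarrow> (real^'n) set \<Rightarrow> bool" where
  "unimodular_copy Y Z \<longleftrightarrow> (\<exists>A b. unimodular_matrix A \<and> int_vec b \<and> Z = (\<lambda>y. A *v y + b) ` Y)"

definition R_unimodular_copy :: "(real^'n) set \<Rightarrow> (real^'n) set \<Rightarrow> bool" where
  "R_unimodular_copy Y Z \<longleftrightarrow> (\<exists>A b. unimodular_matrix A \<and> Z = (\<lambda>y. A *v y + b) ` Y)"

definition std_simplex :: "(real^'n) set" where
  "std_simplex = convex hull (insert 0 {axis i 1 | i. True})"

definition Flt :: "'n::finite itself \<Rightarrow> ereal" where
  "Flt _ = Sup {ereal (lattice_width K) | K :: (real^'n) set.
                 convex_body K \<and> (\<forall>x\<in>K. \<not> int_vec x)}"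

definition Flt_X :: "(real^'n) set \<Rightarrow> ereal" where
  "Flt_X X = Sup {ereal (lattice_width K) | K. convex_body K \<and>
                 \<not> (\<exists>Z. unimodular_copy X Z \<and> Z \<subseteq> K)}"

definition FltR_X :: "(real^'n) set \<Rightarrow> ereal" where
  "FltR_X X = Sup {ereal (lattice_width K) | K. convex_body K \<and>
                 \<not> (\<exists>Z. R_unimodular_copy X Z \<and> Z \<subseteq> K)}"

end

theory Submission
  imports Defs
begin

text \<open>If a convex body K has lattice width larger than \<open>d \<cdot> Flt(d)\<close>, it contains a point p and a
  basis \<open>w\<^sub>1, \<dots>, w\<^sub>d\<close> of \<open>\<int>\<^sup>d\<close> with all \<open>p + w\<^sub>i \<in> K\<close>, i.e. a unimodular image \<open>p + A\<Delta>\<^sub>d\<close> of the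
  standard simplex. The basis is found one vector at a time: write \<open>K = \<alpha>K + (1 - \<alpha>)K\<close> with \<open>\<alpha>K\<close>
  just wider than \<open>Flt(d)\<close> in the lattice directions orthogonal to the vectors found so far.
  Flatness applied to cylinders over \<open>\<alpha>K\<close> along their span yields a lattice chord of \<open>\<alpha>K\<close> modulo
  that span, which can be made primitive; the remaining body \<open>(1 - \<alpha>)K\<close> keeps enough width for
  the other directions. Scaling gives \<open>p + A(n\<Delta>\<^sub>d)\<close> inside every body of width larger than
  \<open>nd \<cdot> Flt(d)\<close>, hence an \<open>\<real>\<close>-unimodular copy of any X contained in a unimodular copy of
  \<open>n\<Delta>\<^sub>d\<close>. An integral translation costs a factor 2.\<close>

section \<open>Lattice vectors and integer spans\<close>

lemma int_vec_add: "int_vec x \<Longrightarrow> int_vec y \<Longrightarrow> int_vec (x + y)"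
  by (simp add: int_vec_def)

lemma int_vec_diff: "int_vec x \<Longrightarrow> int_vec y \<Longrightarrow> int_vec (x - y)"
  by (simp add: int_vec_def)

lemma int_vec_0 [simp]: "int_vec 0"
  by (simp add: int_vec_def)

lemma int_vec_scaleR: "c \<in> \<int> \<Longrightarrow> int_vec x \<Longrightarrow> int_vec (c *\<^sub>R x)"
  by (simp add: int_vec_def)

lemma int_vec_axis [simp]: "int_vec (axis i 1)"
  by (simp add: int_vec_def axis_def)

lemma inner_int_vec_Ints: "int_vec x \<Longrightarrow> int_vec y \<Longrightarrow> x \<bullet> y \<in> \<int>"
  unfolding inner_vec_def int_vec_def by (intro Ints_sum) (simp add: Ints_mult)

lemma not_int_vec_half: "\<not> int_vec (\<chi> i. 1/2 :: real^'n)"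
proof
  assume "int_vec (\<chi> i. 1/2 :: real^'n)"
  then obtain k where "(1/2::real) = of_int k"
    by (auto simp: int_vec_def elim: Ints_cases)
  then have "2 * k = 1" by linarith
  then show False by presburger
qed

lemma finite_int_vec_norm_le: "finite {q::real^'n. int_vec q \<and> norm q \<le> B}"
proof -
  define S where "S = (of_int ` {-\<lceil>B\<rceil>..\<lceil>B\<rceil>} :: real set)"
  have "{q::real^'n. int_vec q \<and> norm q \<le> B} \<subseteq> vec_lambda ` (Pi\<^sub>E UNIV (\<lambda>_. S))"
  proof
    fix q :: "real^'n" assume q: "q \<in> {q. int_vec q \<and> norm q \<le> B}"
    have "q $ i \<in> S" for i
    proof -
      from q obtain k where k: "q $ i = of_int k" by (auto simp: int_vec_def elim: Ints_cases)
      have "\<bar>q $ i\<bar> \<le> B" using q component_le_norm_cart[of q i] by auto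
      then have "\<bar>k\<bar> \<le> \<lceil>B\<rceil>" using k by linarith
      then show ?thesis unfolding S_def using k by (intro image_eqI[of _ _ k]) auto
    qed
    then show "q \<in> vec_lambda ` (Pi\<^sub>E UNIV (\<lambda>_. S))"
      by (intro image_eqI[of _ _ "vec_nth q"]) auto
  qed
  moreover have "finite S" unfolding S_def by simp
  then have "finite (vec_lambda ` (Pi\<^sub>E UNIV (\<lambda>_. S)))"
    by (intro finite_imageI finite_PiE) auto
  ultimately show ?thesis by (rule finite_subset)
qed

inductive_set int_span :: "(real^'n) set \<Rightarrow> (real^'n) set" for B where
  int_span_0: "0 \<in> int_span B"
| int_span_base: "b \<in> B \<Longrightarrow> b \<in> int_span B"
| int_span_diff: "x \<in> int_span B \<Longrightarrow> y \<in> int_span B \<Longrightarrow> x - y \<in> int_span B"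

lemma int_span_neg: "x \<in> int_span B \<Longrightarrow> - x \<in> int_span B"
  using int_span_diff[OF int_span_0, of x B] by simp

lemma int_span_add: "x \<in> int_span B \<Longrightarrow> y \<in> int_span B \<Longrightarrow> x + y \<in> int_span B"
  using int_span_diff[OF _ int_span_neg, of x B y] by simp

lemma int_span_scaleR:
  assumes "c \<in> \<int>" and x: "x \<in> int_span B"
  shows "c *\<^sub>R x \<in> int_span B"
proof -
  have nat: "real k *\<^sub>R x \<in> int_span B" for k
    by (induction k) (auto intro: int_span_0 int_span_add x simp: algebra_simps)
  obtain k where "c = of_int k" using assms(1) by (auto elim: Ints_cases)
  then consider "c = real (nat k)" | "c = - real (nat (-k))" by linarith
  then show ?thesis
  proof cases
    case 1
    then show ?thesis using nat[of "nat k"] by simp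
  next
    case 2
    then show ?thesis using int_span_neg[OF nat[of "nat (-k)"]] by simp
  qed
qed

lemma int_span_trans: "x \<in> int_span A \<Longrightarrow> A \<subseteq> int_span B \<Longrightarrow> x \<in> int_span B"
  by (induction rule: int_span.induct) (auto intro: int_span_0 int_span_diff)

lemma int_span_mono: "x \<in> int_span A \<Longrightarrow> A \<subseteq> B \<Longrightarrow> x \<in> int_span B"
  by (erule int_span_trans) (auto intro: int_span_base)

lemma int_span_subset_span: "x \<in> int_span A \<Longrightarrow> x \<in> span A"
  by (induction rule: int_span.induct) (auto intro: span_0 span_base span_diff)

lemma int_vec_int_span: "x \<in> int_span A \<Longrightarrow> \<forall>v\<in>A. int_vec v \<Longrightarrow> int_vec x"
  by (induction rule: int_span.induct) (auto intro: int_vec_diff)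

lemma int_span_sum:
  "finite S \<Longrightarrow> (\<And>v. v \<in> S \<Longrightarrow> c v \<in> \<int>) \<Longrightarrow> S \<subseteq> A \<Longrightarrow> (\<Sum>v\<in>S. c v *\<^sub>R v) \<in> int_span A"
proof (induction S rule: finite_induct)
  case (insert x F)
  then have "c x *\<^sub>R x \<in> int_span A" by (intro int_span_scaleR int_span_base) auto
  with insert show ?case by (auto intro: int_span_add)
qed (auto intro: int_span_0)

text \<open>Round the coefficients of \<open>q - a\<close> with respect to V down to integers.\<close>
lemma int_span_representative_near:
  assumes V: "finite V" "\<forall>v\<in>V. int_vec v" and q: "int_vec q" and qa: "q - a \<in> span V"
  obtains q' where "int_vec q'" "q - q' \<in> int_span V" "norm (q' - a) \<le> (\<Sum>v\<in>V. norm v)"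
proof -
  obtain c where c: "q - a = (\<Sum>v\<in>V. c v *\<^sub>R v)" using qa span_finite[OF V(1)] by auto
  define q' where "q' = q - (\<Sum>v\<in>V. of_int \<lfloor>c v\<rfloor> *\<^sub>R v)"
  have red: "q - q' \<in> int_span V" unfolding q'_def by (auto intro!: int_span_sum V)
  have int: "int_vec q'" using int_vec_int_span[OF red V(2)] q int_vec_diff[of q "q - q'"] by simp
  have "q' - a = (\<Sum>v\<in>V. (c v - of_int \<lfloor>c v\<rfloor>) *\<^sub>R v)"
    unfolding q'_def using c by (simp add: scaleR_diff_left sum_subtractf algebra_simps)
  then have "norm (q' - a) \<le> (\<Sum>v\<in>V. norm ((c v - of_int \<lfloor>c v\<rfloor>) *\<^sub>R v))" by (metis norm_sum)
  also have "\<dots> \<le> (\<Sum>v\<in>V. norm v)"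
  proof (rule sum_mono)
    fix v
    have "0 \<le> c v - of_int \<lfloor>c v\<rfloor>" "c v - of_int \<lfloor>c v\<rfloor> \<le> 1" by linarith+
    then show "norm ((c v - of_int \<lfloor>c v\<rfloor>) *\<^sub>R v) \<le> norm v"
      by (simp add: mult_left_le_one_le)
  qed
  finally show ?thesis by (rule that[OF int red])
qed

section \<open>Lattice width\<close>

definition dir_width :: "real^'n \<Rightarrow> (real^'n) set \<Rightarrow> real" where
  "dir_width u K = Sup {\<bar>u \<bullet> x - u \<bullet> y\<bar> | x y. x \<in> K \<and> y \<in> K}"

lemma lattice_width_dir_width: "lattice_width K = Inf {dir_width u K | u. int_vec u \<and> u \<noteq> 0}"
  unfolding lattice_width_def dir_width_def by simp

lemma bdd_above_inner_diffs:
  assumes "bounded K"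
  shows "bdd_above {\<bar>u \<bullet> x - u \<bullet> y\<bar> | x y. x \<in> K \<and> y \<in> K}"
proof -
  obtain R where R: "\<And>x. x \<in> K \<Longrightarrow> norm x \<le> R" using assms by (auto simp: bounded_iff)
  have "\<bar>u \<bullet> x - u \<bullet> y\<bar> \<le> norm u * (2*R)" if "x \<in> K" "y \<in> K" for x y
  proof -
    have "\<bar>u \<bullet> x - u \<bullet> y\<bar> \<le> norm u * norm (x - y)"
      using Cauchy_Schwarz_ineq2[of u "x - y"] by (simp add: inner_diff_right)
    moreover have "norm (x - y) \<le> 2*R"
      using R[OF that(1)] R[OF that(2)] norm_triangle_ineq4[of x y] by linarith
    ultimately show ?thesis using mult_left_mono[of "norm (x - y)" "2*R" "norm u"] by simp
  qed
  then show ?thesis by (auto simp: bdd_above_def)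
qed

lemma dir_width_ge: "bounded K \<Longrightarrow> x \<in> K \<Longrightarrow> y \<in> K \<Longrightarrow> \<bar>u \<bullet> x - u \<bullet> y\<bar> \<le> dir_width u K"
  unfolding dir_width_def by (rule cSup_upper[OF _ bdd_above_inner_diffs]) auto

lemma dir_width_le:
  "K \<noteq> {} \<Longrightarrow> (\<And>x y. x \<in> K \<Longrightarrow> y \<in> K \<Longrightarrow> \<bar>u \<bullet> x - u \<bullet> y\<bar> \<le> c) \<Longrightarrow> dir_width u K \<le> c"
  unfolding dir_width_def by (rule cSup_least) blast+

lemma dir_width_nonneg: "bounded K \<Longrightarrow> K \<noteq> {} \<Longrightarrow> 0 \<le> dir_width u K"
  using dir_width_ge[of K _ _ u] by fastforce

lemma dir_width_translate_mono:
  assumes "bounded K'" "K \<noteq> {}" "\<And>x. x \<in> K \<Longrightarrow> p + x \<in> K'"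
  shows "dir_width u K \<le> dir_width u K'"
proof (rule dir_width_le[OF assms(2)])
  fix x y assume "x \<in> K" "y \<in> K"
  then have "\<bar>u \<bullet> (p + x) - u \<bullet> (p + y)\<bar> \<le> dir_width u K'"
    using assms by (intro dir_width_ge) auto
  then show "\<bar>u \<bullet> x - u \<bullet> y\<bar> \<le> dir_width u K'" by (simp add: inner_add_right)
qed

lemma dir_width_scaleR:
  assumes K: "bounded K" "K \<noteq> {}" and c: "c > 0"
  shows "c * dir_width u K \<le> dir_width u ((*\<^sub>R) c ` K)"
proof -
  have "dir_width u K \<le> dir_width u ((*\<^sub>R) c ` K) / c"
  proof (rule dir_width_le[OF K(2)])
    fix x y assume "x \<in> K" "y \<in> K"
    then have "\<bar>u \<bullet> (c *\<^sub>R x) - u \<bullet> (c *\<^sub>R y)\<bar> \<le> dir_width u ((*\<^sub>R) c ` K)"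
      using K by (intro dir_width_ge) (auto simp: bounded_scaling)
    moreover have "\<bar>u \<bullet> (c *\<^sub>R x) - u \<bullet> (c *\<^sub>R y)\<bar> = c * \<bar>u \<bullet> x - u \<bullet> y\<bar>"
      using c by (simp add: right_diff_distrib[symmetric] abs_mult)
    ultimately show "\<bar>u \<bullet> x - u \<bullet> y\<bar> \<le> dir_width u ((*\<^sub>R) c ` K) / c"
      using c by (simp add: field_simps)
  qed
  then show ?thesis using c by (simp add: field_simps)
qed

lemma lattice_width_le_dir_width:
  "bounded K \<Longrightarrow> K \<noteq> {} \<Longrightarrow> int_vec u \<Longrightarrow> u \<noteq> 0 \<Longrightarrow> lattice_width K \<le> dir_width u K"
  unfolding lattice_width_dir_width
  by (rule cInf_lower) (auto intro!: dir_width_nonneg simp: bdd_below_def)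

lemma lattice_width_geI:
  "(\<And>u. int_vec u \<Longrightarrow> u \<noteq> 0 \<Longrightarrow> c \<le> dir_width u K) \<Longrightarrow> c \<le> lattice_width K"
  unfolding lattice_width_dir_width
proof (rule cInf_greatest)
  have "int_vec (axis undefined 1 :: real^'n) \<and> axis undefined 1 \<noteq> (0 :: real^'n)"
    by (simp add: axis_eq_0_iff)
  then show "{dir_width u K |u. int_vec u \<and> u \<noteq> 0} \<noteq> {}" by blast
qed auto

lemma convex_body_scaleR: "convex_body K \<Longrightarrow> convex_body ((*\<^sub>R) c ` K)"
  unfolding convex_body_def by (auto intro: compact_scaling convex_scaling)

lemma convex_body_translation: "convex_body K \<Longrightarrow> convex_body ((+) p ` K)"
  unfolding convex_body_def by (auto intro: compact_translation convex_translation)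

lemma convex_body_sums:
  assumes "convex_body A" "convex_body B"
  shows "convex_body {x + y | x y. x \<in> A \<and> y \<in> B}"
proof -
  have "{x + y | x y. x \<in> A \<and> y \<in> B} = (\<Union>x\<in>A. \<Union>y\<in>B. {x + y})" by auto
  moreover have "convex (\<Union>x\<in>A. \<Union>y\<in>B. {x + y})"
    using assms unfolding convex_body_def by (intro convex_sums) auto
  ultimately have "convex {x + y | x y. x \<in> A \<and> y \<in> B}" by simp
  then show ?thesis using assms unfolding convex_body_def by (auto intro: compact_sums)
qed

lemma lattice_width_scaleR:
  fixes K :: "(real^'n) set"
  assumes K: "convex_body K" and c: "c > 0"
  shows "c * lattice_width K \<le> lattice_width ((*\<^sub>R) c ` K)"
proof (rule lattice_width_geI)
  fix u :: "real^'n" assume u: "int_vec u" "u \<noteq> 0"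
  have Kb: "bounded K" "K \<noteq> {}" using K by (auto simp: convex_body_def compact_imp_bounded)
  have "c * lattice_width K \<le> c * dir_width u K"
    using lattice_width_le_dir_width[OF Kb u] c by simp
  also have "\<dots> \<le> dir_width u ((*\<^sub>R) c ` K)" by (rule dir_width_scaleR[OF Kb c])
  finally show "c * lattice_width K \<le> dir_width u ((*\<^sub>R) c ` K)" .
qed

lemma lattice_width_translation:
  fixes K :: "(real^'n) set"
  assumes K: "convex_body K"
  shows "lattice_width K \<le> lattice_width ((+) p ` K)"
proof (rule lattice_width_geI)
  fix u :: "real^'n" assume u: "int_vec u" "u \<noteq> 0"
  have Kb: "bounded K" "K \<noteq> {}" using K by (auto simp: convex_body_def compact_imp_bounded)
  have "lattice_width K \<le> dir_width u K" by (rule lattice_width_le_dir_width[OF Kb u])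
  also have "\<dots> \<le> dir_width u ((+) p ` K)"
    using Kb by (intro dir_width_translate_mono) (auto simp: bounded_translation)
  finally show "lattice_width K \<le> dir_width u ((+) p ` K)" .
qed

definition flatness_bound :: "real \<Rightarrow> 'n::finite itself \<Rightarrow> bool" where
  "flatness_bound F _ \<longleftrightarrow>
     (\<forall>K::(real^'n) set. convex_body K \<longrightarrow> F < lattice_width K \<longrightarrow> (\<exists>x\<in>K. int_vec x))"

lemma flatness_boundD:
  fixes K :: "(real^'n) set"
  assumes "flatness_bound F TYPE('n)" "convex_body K" "F < lattice_width K"
  shows "\<exists>x\<in>K. int_vec x"
  using assms unfolding flatness_bound_def by blast

lemma lattice_width_singleton_nonneg: "0 \<le> lattice_width {c}"
  by (rule lattice_width_geI) (auto intro: dir_width_nonneg)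

lemma flatness_bound_nonneg:
  assumes "flatness_bound F TYPE('n::finite)"
  shows "0 \<le> F"
proof (rule ccontr)
  assume "\<not> 0 \<le> F"
  then have "F < lattice_width {\<chi> i. 1/2 :: real^'n}"
    using lattice_width_singleton_nonneg[of "\<chi> i. 1/2 :: real^'n"] by linarith
  then have "\<exists>x\<in>{\<chi> i. 1/2 :: real^'n}. int_vec x"
    by (rule flatness_boundD[OF assms, rotated]) (simp add: convex_body_def)
  then show False using not_int_vec_half[where 'n='n] by simp
qed

lemma Flt_nonneg: "0 \<le> Flt TYPE('n::finite)"
proof -
  have "ereal (lattice_width {\<chi> i. 1/2 :: real^'n}) \<le> Flt TYPE('n)"
    unfolding Flt_def using not_int_vec_half[where 'n='n]
    by (intro Sup_upper) (auto simp: convex_body_def)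
  moreover have "(0::ereal) \<le> ereal (lattice_width {\<chi> i. 1/2 :: real^'n})"
    using lattice_width_singleton_nonneg by simp
  ultimately show ?thesis by (rule order_trans[rotated])
qed

lemma flatness_bound_Flt:
  assumes Flt: "Flt TYPE('n::finite) = ereal F"
  shows "flatness_bound F TYPE('n)"
  unfolding flatness_bound_def
proof (intro allI impI)
  fix K :: "(real^'n) set"
  assume K: "convex_body K" "F < lattice_width K"
  show "\<exists>x\<in>K. int_vec x"
  proof (rule ccontr)
    assume "\<not> (\<exists>x\<in>K. int_vec x)"
    then have "ereal (lattice_width K) \<le> Flt TYPE('n)"
      unfolding Flt_def using K(1) by (intro Sup_upper) auto
    with Flt K(2) show False by simp
  qed
qed

section \<open>Lattice chords of wide bodies\<close>

definition orth_width_ge :: "(real^'n) set \<Rightarrow> (real^'n) set \<Rightarrow> real \<Rightarrow> bool" where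
  "orth_width_ge V M \<omega> \<longleftrightarrow>
     (\<forall>u. int_vec u \<longrightarrow> u \<noteq> 0 \<longrightarrow> (\<forall>v\<in>V. u \<bullet> v = 0) \<longrightarrow> \<omega> \<le> dir_width u M)"

lemma orth_width_geD:
  "orth_width_ge V M \<omega> \<Longrightarrow> int_vec u \<Longrightarrow> u \<noteq> 0 \<Longrightarrow> \<forall>v\<in>V. u \<bullet> v = 0 \<Longrightarrow> \<omega> \<le> dir_width u M"
  unfolding orth_width_ge_def by blast

lemma orth_width_ge_insert: "orth_width_ge V M \<omega> \<Longrightarrow> orth_width_ge (insert x V) M \<omega>"
  unfolding orth_width_ge_def by auto

lemma orth_width_ge_scaleR:
  assumes L: "convex_body L" and c: "0 < c" and W: "orth_width_ge V L \<omega>"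
  shows "orth_width_ge V ((*\<^sub>R) c ` L) (c * \<omega>)"
  unfolding orth_width_ge_def
proof (intro allI impI)
  fix u assume u: "int_vec u" "u \<noteq> 0" "\<forall>v\<in>V. u \<bullet> v = 0"
  have "c * \<omega> \<le> c * dir_width u L" using c orth_width_geD[OF W u] by simp
  also have "\<dots> \<le> dir_width u ((*\<^sub>R) c ` L)"
    using L c by (intro dir_width_scaleR) (auto simp: convex_body_def compact_imp_bounded)
  finally show "c * \<omega> \<le> dir_width u ((*\<^sub>R) c ` L)" .
qed

definition cylinder :: "(real^'n) set \<Rightarrow> (real^'n) set \<Rightarrow> (real^'n) set" where
  "cylinder M V = {m + s | m s. m \<in> M \<and> s \<in> span V}"

lemma closed_cylinder: "compact M \<Longrightarrow> closed (cylinder M V)"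
proof -
  assume "compact M"
  moreover have "cylinder M V = (\<Union>x\<in>M. \<Union>y\<in>span V. {x + y})" unfolding cylinder_def by auto
  ultimately show ?thesis by (simp add: compact_closed_sums closed_subspace subspace_span)
qed

lemma cylinder_shift_iff:
  assumes "q' - q \<in> span V"
  shows "q' - a \<in> cylinder M V \<longleftrightarrow> q - a \<in> cylinder M V"
proof -
  have shift: "c + s \<in> cylinder M V" if "c \<in> cylinder M V" "s \<in> span V" for c s
  proof -
    from that obtain m s0 where "c = m + s0" "m \<in> M" "s0 \<in> span V" unfolding cylinder_def by auto
    then show ?thesis unfolding cylinder_def using that(2)
      by (intro CollectI exI[of _ m] exI[of _ "s0 + s"]) (auto intro: span_add)
  qed
  show ?thesis
  proof
    assume "q' - a \<in> cylinder M V"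
    from shift[OF this span_neg[OF assms]] show "q - a \<in> cylinder M V" by simp
  next
    assume "q - a \<in> cylinder M V"
    from shift[OF this assms] show "q' - a \<in> cylinder M V" by simp
  qed
qed

lemma dir_width_ge_lattice_segment:
  assumes K: "bounded K" "a + c *\<^sub>R v \<in> K" "a - c *\<^sub>R v \<in> K" and c: "0 \<le> c"
    and u: "int_vec u" "int_vec v" "u \<bullet> v \<noteq> 0"
  shows "2 * c \<le> dir_width u K"
proof -
  have "1 \<le> \<bar>u \<bullet> v\<bar>" using Ints_nonzero_abs_ge1 inner_int_vec_Ints u by blast
  then have "2 * c \<le> 2 * c * \<bar>u \<bullet> v\<bar>" using c mult_left_mono[of 1 "\<bar>u \<bullet> v\<bar>" "2 * c"] by simp
  also have "\<dots> = \<bar>u \<bullet> (a + c *\<^sub>R v) - u \<bullet> (a - c *\<^sub>R v)\<bar>"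
    using c by (simp add: inner_add_right inner_diff_right abs_mult algebra_simps)
  also have "\<dots> \<le> dir_width u K" by (rule dir_width_ge[OF K])
  finally show ?thesis .
qed

lemma cylinder_chord:
  assumes "q0 - a \<in> cylinder M V" "q1 - a \<in> cylinder M V"
  shows "\<exists>z z'. z \<in> M \<and> z' \<in> M \<and> z' - z - (q1 - q0) \<in> span V"
proof -
  obtain m0 s0 m1 s1 where "q0 - a = m0 + s0" "q1 - a = m1 + s1" "m0 \<in> M" "m1 \<in> M"
    "s0 \<in> span V" "s1 \<in> span V"
    using assms unfolding cylinder_def by blast
  moreover from this have "m1 - m0 - (q1 - q0) = s0 - s1" by (simp add: algebra_simps)
  ultimately show ?thesis using span_diff by metis
qed

text \<open>Flatness is applied to \<open>p + M + conv {0, \<plusminus>N v | v \<in> V}\<close>: it is wide in the lattice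
  directions orthogonal to V because of M, and at least 2N wide in every other lattice direction u,
  since \<open>u \<bullet> v\<close> is then a nonzero integer for some \<open>v \<in> V\<close>.\<close>
lemma lattice_point_in_cylinder:
  fixes M :: "(real^'n) set"
  assumes flat: "flatness_bound F TYPE('n)" and V: "finite V" "\<forall>v\<in>V. int_vec v"
    and M: "convex_body M" and om: "F < \<omega>" and W: "orth_width_ge V M \<omega>"
  shows "\<exists>q. int_vec q \<and> q - p \<in> cylinder M V"
proof -
  have F0: "0 \<le> F" by (rule flatness_bound_nonneg[OF flat])
  define N where "N = F + 1"
  define P where "P = convex hull (insert 0 ((*\<^sub>R) N ` V \<union> (*\<^sub>R) (-N) ` V))"
  define K where "K = {x + y | x y. x \<in> (+) p ` M \<and> y \<in> P}"
  have "convex_body P" unfolding P_def convex_body_def using V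
    by (auto intro: compact_convex_hull finite_imp_compact)
  then have Kb: "convex_body K" unfolding K_def by (intro convex_body_sums convex_body_translation M)
  have PV: "P \<subseteq> span V" unfolding P_def
    by (rule hull_minimal) (auto intro: span_0 span_mul span_base span_neg subspace_imp_convex subspace_span)
  have P0: "0 \<in> P" unfolding P_def by (rule hull_inc) simp
  have PN: "N *\<^sub>R v \<in> P" "(-N) *\<^sub>R v \<in> P" if "v \<in> V" for v
    unfolding P_def using that by (auto intro!: hull_inc)
  have "bounded K" "M \<noteq> {}" using Kb M by (auto simp: convex_body_def compact_imp_bounded)
  have "min \<omega> (2*N) \<le> lattice_width K"
  proof (rule lattice_width_geI)
    fix u :: "real^'n" assume u: "int_vec u" "u \<noteq> 0"
    show "min \<omega> (2*N) \<le> dir_width u K"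
    proof (cases "\<forall>v\<in>V. u \<bullet> v = 0")
      case True
      have "dir_width u M \<le> dir_width u K"
      proof (rule dir_width_translate_mono[OF \<open>bounded K\<close> \<open>M \<noteq> {}\<close>, of p])
        show "p + x \<in> K" if "x \<in> M" for x
          unfolding K_def using that P0 by (intro CollectI exI[of _ "p + x"] exI[of _ 0]) auto
      qed
      then show ?thesis using orth_width_geD[OF W u True] by linarith
    next
      case False
      then obtain v where v: "v \<in> V" "u \<bullet> v \<noteq> 0" by auto
      obtain m where m: "m \<in> M" using \<open>M \<noteq> {}\<close> by auto
      have "p + m + N *\<^sub>R v \<in> K" "p + m - N *\<^sub>R v \<in> K"
        unfolding K_def using m PN[OF v(1)]
        by (intro CollectI exI[of _ "p + m"] exI[of _ "N *\<^sub>R v"] exI[of _ "(-N) *\<^sub>R v"]; auto)+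
      then have "2 * N \<le> dir_width u K"
        using F0 u(1) V(2) v by (intro dir_width_ge_lattice_segment[OF \<open>bounded K\<close>]) (auto simp: N_def)
      then show ?thesis by linarith
    qed
  qed
  moreover have "F < min \<omega> (2*N)" using om F0 by (simp add: N_def)
  ultimately obtain q where q: "q \<in> K" "int_vec q" using flatness_boundD[OF flat Kb] by force
  then obtain m y where "m \<in> M" "y \<in> P" "q - p = m + y" unfolding K_def by auto
  then show ?thesis using q PV unfolding cylinder_def by blast
qed

lemma lattice_point_in_cylinder_near:
  assumes V: "finite V" "\<forall>v\<in>V. int_vec v" and R: "\<And>m. m \<in> M \<Longrightarrow> norm m \<le> R"
    and q: "int_vec q" "q - p \<in> cylinder M V"
  obtains q' where "int_vec q'" "q' - q \<in> span V" "norm q' \<le> norm p + R + (\<Sum>v\<in>V. norm v)"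
proof -
  obtain m s where ms: "q - p = m + s" "m \<in> M" "s \<in> span V" using q(2) unfolding cylinder_def by auto
  then have "q - (p + m) \<in> span V" by (simp add: algebra_simps)
  then obtain q' where q': "int_vec q'" "q - q' \<in> int_span V" "norm (q' - (p + m)) \<le> (\<Sum>v\<in>V. norm v)"
    using int_span_representative_near[OF V q(1)] by blast
  have "norm q' \<le> norm (q' - (p + m)) + norm p + norm m"
    using norm_triangle_ineq[of "q' - (p + m)" "p + m"] norm_triangle_ineq[of p m] by simp
  then have "norm q' \<le> norm p + R + (\<Sum>v\<in>V. norm v)" using q'(3) R[OF ms(2)] by linarith
  moreover have "q' - q \<in> span V" using span_neg[OF int_span_subset_span[OF q'(2)]] by simp
  ultimately show ?thesis using that q'(1) by blast
qed

lemma closed_cylinder_levels: "compact M \<Longrightarrow> closed {t::real. q - t *\<^sub>R e \<in> cylinder M V}"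
proof -
  assume "compact M"
  have "{t. q - t *\<^sub>R e \<in> cylinder M V} = (\<lambda>t. q - t *\<^sub>R e) -` cylinder M V" by auto
  then show ?thesis using closed_cylinder[OF \<open>compact M\<close>]
    by (auto intro!: continuous_closed_vimage continuous_intros)
qed

lemma cylinder_levels_bdd_above:
  assumes R: "\<And>m. m \<in> M \<Longrightarrow> norm m \<le> R" and e: "e \<noteq> 0" "\<And>y. y \<in> span V \<Longrightarrow> e \<bullet> y = 0"
  shows "bdd_above {t. q - t *\<^sub>R e \<in> cylinder M V}"
proof (rule bdd_aboveI)
  fix t assume "t \<in> {t. q - t *\<^sub>R e \<in> cylinder M V}"
  then obtain m s where ms: "q - t *\<^sub>R e = m + s" "m \<in> M" "s \<in> span V" unfolding cylinder_def by auto
  have "e \<bullet> q - t * (e \<bullet> e) = e \<bullet> m"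
    using arg_cong[OF ms(1), of "(\<bullet>) e"] e(2)[OF ms(3)] by (simp add: inner_diff_right inner_add_right)
  moreover have "\<bar>e \<bullet> m\<bar> \<le> norm e * R"
    using Cauchy_Schwarz_ineq2[of e m] R[OF ms(2)] mult_left_mono[of "norm m" R "norm e"] by auto
  ultimately have "t * (e \<bullet> e) \<le> \<bar>e \<bullet> q\<bar> + norm e * R" by linarith
  then show "t \<le> (\<bar>e \<bullet> q\<bar> + norm e * R) / (e \<bullet> e)" using e(1) by (simp add: field_simps)
qed

text \<open>The lattice translates of the cylinder \<open>C = M + span V\<close> cover space. Follow a direction e
  orthogonal to span V: the last level b at which \<open>q\<^sub>0 - b e\<close> still lies in C is also attained
  by a translate from another class modulo span V, because finitely many classes cover the levels
  in \<open>(b, b + 1)\<close> and their level sets are closed. The difference of the two classes is the chord.\<close>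
lemma lattice_chord_of_cylinder_cover:
  fixes M :: "(real^'n) set"
  assumes V: "finite V" "\<forall>v\<in>V. int_vec v" and SV: "span V \<noteq> UNIV" and M: "compact M"
    and cover: "\<And>p. \<exists>q. int_vec q \<and> q - p \<in> cylinder M V"
  shows "\<exists>x z z'. int_vec x \<and> x \<notin> span V \<and> z \<in> M \<and> z' \<in> M \<and> z' - z - x \<in> span V"
proof -
  have "dim V < DIM(real^'n)" using SV dim_eq_full[of V] dim_subset_UNIV[of V] by linarith
  then obtain e :: "real^'n" where e: "e \<noteq> 0" "\<And>y. y \<in> span V \<Longrightarrow> e \<bullet> y = 0"
    by (metis orthogonal_to_subspace_exists orthogonal_def)
  obtain R where R: "\<And>m. m \<in> M \<Longrightarrow> norm m \<le> R" using compact_imp_bounded[OF M] by (auto simp: bounded_iff)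
  define A where "A q = {t::real. q - t *\<^sub>R e \<in> cylinder M V}" for q
  have Acl: "closed (A q)" for q unfolding A_def by (rule closed_cylinder_levels[OF M])
  obtain q0 where q0: "int_vec q0" "0 \<in> A q0" using cover[of 0] unfolding A_def by auto
  have "bdd_above (A q0)" unfolding A_def by (rule cylinder_levels_bdd_above[OF R e])
  define b where "b = Sup (A q0)"
  have bA: "b \<in> A q0" unfolding b_def using q0(2) \<open>bdd_above (A q0)\<close> Acl
    by (intro closed_contains_Sup) auto
  have bmax: "t \<le> b" if "t \<in> A q0" for t
    unfolding b_def using that \<open>bdd_above (A q0)\<close> by (rule cSup_upper)
  define Q where "Q = {q. int_vec q \<and> norm q \<le> (\<bar>b\<bar> + 1) * norm e + R + (\<Sum>v\<in>V. norm v) \<and> q - q0 \<notin> span V}"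
  have "finite Q" unfolding Q_def by (rule finite_subset[OF _ finite_int_vec_norm_le]) auto
  then have Ucl: "closed (\<Union>q\<in>Q. A q)" using Acl by auto
  have levels: "{b<..<b+1} \<subseteq> (\<Union>q\<in>Q. A q)"
  proof
    fix t assume t: "t \<in> {b<..<b+1}"
    obtain q where q: "int_vec q" "q - t *\<^sub>R e \<in> cylinder M V" using cover[of "t *\<^sub>R e"] by auto
    then obtain q' where q': "int_vec q'" "q' - q \<in> span V"
      "norm q' \<le> norm (t *\<^sub>R e) + R + (\<Sum>v\<in>V. norm v)"
      using lattice_point_in_cylinder_near[OF V R] by blast
    moreover have "norm (t *\<^sub>R e) \<le> (\<bar>b\<bar> + 1) * norm e" using t by (auto intro!: mult_right_mono)
    ultimately have nq': "norm q' \<le> (\<bar>b\<bar> + 1) * norm e + R + (\<Sum>v\<in>V. norm v)" by linarith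
    have tq': "t \<in> A q'" using q(2) cylinder_shift_iff[OF q'(2)] unfolding A_def by simp
    have "q' - q0 \<notin> span V"
    proof
      assume "q' - q0 \<in> span V"
      then have "t \<in> A q0" using tq' cylinder_shift_iff unfolding A_def by blast
      then show False using bmax[of t] t by simp
    qed
    then show "t \<in> (\<Union>q\<in>Q. A q)"
      unfolding Q_def using q'(1) nq' tq' by blast
  qed
  have "b \<in> closure {b<..<b+1}" by simp
  then have "b \<in> (\<Union>q\<in>Q. A q)" using closure_minimal[OF levels Ucl] by blast
  then obtain q1 where q1: "q1 \<in> Q" "b \<in> A q1" by auto
  then obtain z z' where "z \<in> M" "z' \<in> M" "z' - z - (q1 - q0) \<in> span V"
    using cylinder_chord bA unfolding A_def by blast
  moreover have "int_vec (q1 - q0)" using q1(1) q0(1) unfolding Q_def by (auto intro: int_vec_diff)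
  ultimately show ?thesis using q1(1) unfolding Q_def by blast
qed

lemma lattice_chord:
  fixes M :: "(real^'n) set"
  assumes flat: "flatness_bound F TYPE('n)" and V: "finite V" "\<forall>v\<in>V. int_vec v"
    and SV: "span V \<noteq> UNIV" and M: "convex_body M" and om: "F < \<omega>" and W: "orth_width_ge V M \<omega>"
  shows "\<exists>x z z'. int_vec x \<and> x \<notin> span V \<and> z \<in> M \<and> z' \<in> M \<and> z' - z - x \<in> span V"
  using lattice_chord_of_cylinder_cover[OF V SV _ lattice_point_in_cylinder[OF flat V M om W]] M
  by (simp add: convex_body_def)

lemma finite_lattice_levels:
  fixes x :: "real^'n"
  assumes V: "finite V" "\<forall>v\<in>V. int_vec v" and x: "x \<notin> span V"
  shows "finite {t. 0 < t \<and> t \<le> 1 \<and> (\<exists>y. int_vec y \<and> y - t *\<^sub>R x \<in> span V)}"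
    (is "finite ?T")
proof -
  define Fin where "Fin = {q::real^'n. int_vec q \<and> norm q \<le> norm x + (\<Sum>v\<in>V. norm v)}"
  have level_unique: "t = t'" if "q - t *\<^sub>R x \<in> span V" "q - t' *\<^sub>R x \<in> span V" for q t t'
  proof (rule ccontr)
    assume ne: "t \<noteq> t'"
    have "(t' - t) *\<^sub>R x \<in> span V" using span_diff[OF that] by (simp add: algebra_simps)
    then have "(1 / (t' - t)) *\<^sub>R ((t' - t) *\<^sub>R x) \<in> span V" by (rule span_mul)
    then show False using ne x by simp
  qed
  have "finite {t. q - t *\<^sub>R x \<in> span V}" for q
  proof (cases "\<exists>t0. q - t0 *\<^sub>R x \<in> span V")
    case True
    then obtain t0 where "q - t0 *\<^sub>R x \<in> span V" by auto
    then have "{t. q - t *\<^sub>R x \<in> span V} \<subseteq> {t0}" using level_unique by auto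
    then show ?thesis by (rule finite_subset) simp
  qed simp
  moreover have "?T \<subseteq> (\<Union>q\<in>Fin. {t. q - t *\<^sub>R x \<in> span V})"
  proof
    fix t assume "t \<in> ?T"
    then obtain y where y: "int_vec y" "y - t *\<^sub>R x \<in> span V" "0 < t" "t \<le> 1" by auto
    then obtain q where q: "int_vec q" "y - q \<in> int_span V" "norm (q - t *\<^sub>R x) \<le> (\<Sum>v\<in>V. norm v)"
      using int_span_representative_near[OF V y(1) y(2)] by blast
    have "norm q \<le> norm (q - t *\<^sub>R x) + norm (t *\<^sub>R x)"
      using norm_triangle_ineq[of "q - t *\<^sub>R x" "t *\<^sub>R x"] by simp
    moreover have "norm (t *\<^sub>R x) \<le> norm x" using y(3,4) by (simp add: mult_left_le_one_le)
    ultimately have "q \<in> Fin" unfolding Fin_def using q by auto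
    moreover have "q - t *\<^sub>R x \<in> span V"
      using span_diff[OF y(2) int_span_subset_span[OF q(2)]] by simp
    ultimately show "t \<in> (\<Union>q\<in>Fin. {t. q - t *\<^sub>R x \<in> span V})" by auto
  qed
  moreover have "finite Fin" unfolding Fin_def by (rule finite_int_vec_norm_le)
  ultimately show ?thesis by (meson finite_UN_I finite_subset)
qed

lemma primitive_of_minimal_level:
  fixes x x0 :: "real^'n"
  assumes x0: "int_vec x0" "x0 - t0 *\<^sub>R x \<in> span V" "0 < t0"
    and min: "\<And>t y. 0 < t \<Longrightarrow> t < t0 \<Longrightarrow> int_vec y \<Longrightarrow> y - t *\<^sub>R x \<in> span V \<Longrightarrow> False"
    and y: "int_vec y" "y \<in> span (insert x0 V)"
  shows "\<exists>j\<in>\<int>. y - j *\<^sub>R x0 \<in> span V"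
proof -
  obtain k where k: "y - k *\<^sub>R x0 \<in> span V" using y(2) span_breakdown_eq by blast
  define j where "j = real_of_int \<lfloor>k\<rfloor>"
  define \<delta> where "\<delta> = k - j"
  have \<delta>: "0 \<le> \<delta>" "\<delta> < 1" unfolding \<delta>_def j_def by linarith+
  have "\<delta> = 0"
  proof (rule ccontr)
    assume "\<delta> \<noteq> 0"
    have "(y - j *\<^sub>R x0) - (\<delta> * t0) *\<^sub>R x = (y - k *\<^sub>R x0) + \<delta> *\<^sub>R (x0 - t0 *\<^sub>R x)"
      unfolding \<delta>_def by (simp add: algebra_simps)
    also have "\<dots> \<in> span V" by (rule span_add[OF k span_mul[OF x0(2)]])
    finally have "(y - j *\<^sub>R x0) - (\<delta> * t0) *\<^sub>R x \<in> span V" .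
    moreover have "int_vec (y - j *\<^sub>R x0)"
      using y(1) x0(1) by (intro int_vec_diff int_vec_scaleR) (auto simp: j_def)
    moreover have "0 < \<delta> * t0" "\<delta> * t0 < t0" using \<open>\<delta> \<noteq> 0\<close> \<delta> x0(3) by auto
    ultimately show False using min by blast
  qed
  then show ?thesis using k unfolding \<delta>_def j_def by (metis Ints_of_int eq_iff_diff_eq_0)
qed

text \<open>Among the lattice points whose class modulo span V lies on the segment \<open>(0, x]\<close>, take
  one, \<open>x\<^sub>0\<close>, closest to 0; the chord from z shrinks accordingly inside M.\<close>
lemma primitive_lattice_chord:
  fixes M :: "(real^'n) set"
  assumes V: "finite V" "\<forall>v\<in>V. int_vec v" and x: "int_vec x" "x \<notin> span V"
    and M: "convex M" and z: "z \<in> M" "z' \<in> M" "z' - z - x \<in> span V"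
  obtains x0 z1 where "int_vec x0" "x0 \<notin> span V" "z1 \<in> M" "z1 - z - x0 \<in> span V"
    "\<And>y. int_vec y \<Longrightarrow> y \<in> span (insert x0 V) \<Longrightarrow> \<exists>j\<in>\<int>. y - j *\<^sub>R x0 \<in> span V"
proof -
  define T where "T = {t. 0 < t \<and> t \<le> 1 \<and> (\<exists>y. int_vec y \<and> y - t *\<^sub>R x \<in> span V)}"
  have fT: "finite T" unfolding T_def using finite_lattice_levels[OF V x(2)] .
  have "1 \<in> T" unfolding T_def using x by (auto intro!: exI[of _ x] span_0)
  define t0 where "t0 = Min T"
  have "t0 \<in> T" unfolding t0_def using fT \<open>1 \<in> T\<close> by (auto intro: Min_in)
  have t0min: "t0 \<le> t" if "t \<in> T" for t unfolding t0_def using fT that by simp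
  obtain x0 where x0: "int_vec x0" "x0 - t0 *\<^sub>R x \<in> span V" "0 < t0" "t0 \<le> 1"
    using \<open>t0 \<in> T\<close> unfolding T_def by auto
  have min: False if "0 < t" "t < t0" "int_vec y" "y - t *\<^sub>R x \<in> span V" for t y
    using that t0min[of t] x0(4) unfolding T_def by auto
  define z1 where "z1 = (1 - t0) *\<^sub>R z + t0 *\<^sub>R z'"
  have "z1 \<in> M" unfolding z1_def using x0 z by (intro convexD[OF M]) auto
  have "z1 - z - x0 = t0 *\<^sub>R (z' - z - x) - (x0 - t0 *\<^sub>R x)"
    unfolding z1_def by (simp add: algebra_simps)
  also have "\<dots> \<in> span V" by (rule span_diff[OF span_mul[OF z(3)] x0(2)])
  finally have "z1 - z - x0 \<in> span V" .
  have "x0 \<notin> span V"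
  proof
    assume "x0 \<in> span V"
    then have "t0 *\<^sub>R x \<in> span V" using span_diff[OF _ x0(2)] by fastforce
    then have "(1/t0) *\<^sub>R (t0 *\<^sub>R x) \<in> span V" by (rule span_mul)
    then show False using x0(3) x(2) by simp
  qed
  moreover have "\<exists>j\<in>\<int>. y - j *\<^sub>R x0 \<in> span V" if "int_vec y" "y \<in> span (insert x0 V)" for y
    by (rule primitive_of_minimal_level[OF x0(1-3) _ that]) (use min in blast)
  ultimately show ?thesis using x0(1) \<open>z1 \<in> M\<close> \<open>z1 - z - x0 \<in> span V\<close> that by blast
qed

section \<open>A lattice basis inside a wide body\<close>

definition lattice_saturated :: "(real^'n) set \<Rightarrow> bool" where
  "lattice_saturated V \<longleftrightarrow> (\<forall>y. int_vec y \<longrightarrow> y \<in> span V \<longrightarrow> y \<in> int_span V)"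

definition spans_lattice :: "(real^'n) set \<Rightarrow> bool" where
  "spans_lattice W \<longleftrightarrow> (\<forall>y. int_vec y \<longrightarrow> y \<in> int_span W)"

lemma lattice_saturated_insert:
  assumes V: "lattice_saturated V" and x: "int_vec x"
    and prim: "\<And>y. int_vec y \<Longrightarrow> y \<in> span (insert x V) \<Longrightarrow> \<exists>j\<in>\<int>. y - j *\<^sub>R x \<in> span V"
  shows "lattice_saturated (insert x V)"
  unfolding lattice_saturated_def
proof (intro allI impI)
  fix y assume y: "int_vec y" "y \<in> span (insert x V)"
  then obtain j where j: "j \<in> \<int>" "y - j *\<^sub>R x \<in> span V" using prim by blast
  have "int_vec (y - j *\<^sub>R x)" using y j x by (intro int_vec_diff int_vec_scaleR) auto
  then have "y - j *\<^sub>R x \<in> int_span (insert x V)"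
    using V j unfolding lattice_saturated_def by (auto intro: int_span_mono)
  moreover have "j *\<^sub>R x \<in> int_span (insert x V)" by (intro int_span_scaleR j int_span_base) simp
  ultimately show "y \<in> int_span (insert x V)" using int_span_add by fastforce
qed

lemma spans_lattice_shift:
  fixes x :: "real^'n"
  assumes W: "spans_lattice (insert x V \<union> W)" and k: "\<forall>w\<in>W. k w \<in> \<int>"
  shows "spans_lattice (V \<union> insert x ((\<lambda>w. w + k w *\<^sub>R x) ` W))"
  unfolding spans_lattice_def
proof (intro allI impI)
  let ?W' = "V \<union> insert x ((\<lambda>w. w + k w *\<^sub>R x) ` W)"
  have x: "x \<in> int_span ?W'" by (intro int_span_base) simp
  have "w \<in> int_span ?W'" if "w \<in> W" for w
  proof -
    have "w + k w *\<^sub>R x \<in> int_span ?W'" using that by (intro int_span_base) simp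
    moreover have "k w *\<^sub>R x \<in> int_span ?W'" using that k by (intro int_span_scaleR x) auto
    ultimately show ?thesis using int_span_diff by fastforce
  qed
  then have "insert x V \<union> W \<subseteq> int_span ?W'" using x by (auto intro: int_span_base)
  moreover fix y :: "real^'n" assume "int_vec y"
  ultimately show "y \<in> int_span ?W'" using W unfolding spans_lattice_def by (blast intro: int_span_trans)
qed

text \<open>Write \<open>s = t x + s'\<close> with \<open>s' \<in> span V\<close>. Rounding t up to \<open>\<lceil>t\<rceil>\<close> is paid for by moving z
  the fraction \<open>\<lceil>t\<rceil> - t\<close> of the way to \<open>z\<^sub>1\<close>, which stays in M.\<close>
lemma lift_chord_into_sum:
  assumes M: "convex M" "z \<in> M" "z1 \<in> M" "z1 - z - x \<in> span V"
    and sum: "\<And>a m. a \<in> L' \<Longrightarrow> m \<in> M \<Longrightarrow> a + m \<in> L"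
    and w: "p + w + s \<in> L'" "s \<in> span (insert x V)"
  shows "\<exists>k\<in>\<int>. \<exists>s'\<in>span V. (p + z) + (w + k *\<^sub>R x) + s' \<in> L"
proof -
  obtain t where t: "s - t *\<^sub>R x \<in> span V" using w(2) span_breakdown_eq by blast
  define \<theta> where "\<theta> = of_int \<lceil>t\<rceil> - t"
  have "0 \<le> \<theta>" "\<theta> \<le> 1" unfolding \<theta>_def by linarith+
  then have "(1 - \<theta>) *\<^sub>R z + \<theta> *\<^sub>R z1 \<in> M" using M by (intro convexD) auto
  then have "(p + w + s) + ((1 - \<theta>) *\<^sub>R z + \<theta> *\<^sub>R z1) \<in> L" by (rule sum[OF w(1)])
  moreover have "(p + w + s) + ((1 - \<theta>) *\<^sub>R z + \<theta> *\<^sub>R z1) =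
      (p + z) + (w + of_int \<lceil>t\<rceil> *\<^sub>R x) + ((s - t *\<^sub>R x) + \<theta> *\<^sub>R (z1 - z - x))"
    unfolding \<theta>_def by (simp add: algebra_simps)
  moreover have "(s - t *\<^sub>R x) + \<theta> *\<^sub>R (z1 - z - x) \<in> span V"
    by (rule span_add[OF t span_mul[OF M(4)]])
  ultimately show ?thesis by (metis Ints_of_int)
qed

lemma split_width_budget:
  fixes F \<rho> \<omega> :: real
  assumes "0 \<le> F" "0 \<le> \<rho>" "\<rho> + F < \<omega>"
  obtains \<alpha> where "0 < \<alpha>" "\<alpha> < 1" "F < \<alpha> * \<omega>" "\<rho> < (1 - \<alpha>) * \<omega>"
proof -
  define \<delta> where "\<delta> = (\<omega> - \<rho> - F) / 2"
  have "0 < \<delta>" "F + \<delta> < \<omega>" "0 < \<omega>" using assms unfolding \<delta>_def by (simp_all add: field_simps)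
  define \<alpha> where "\<alpha> = (F + \<delta>) / \<omega>"
  have "\<alpha> * \<omega> = F + \<delta>" unfolding \<alpha>_def using \<open>0 < \<omega>\<close> by simp
  moreover have "0 < \<alpha>" "\<alpha> < 1"
    unfolding \<alpha>_def using \<open>0 < \<delta>\<close> \<open>F + \<delta> < \<omega>\<close> \<open>0 < \<omega>\<close> assms(1) by (auto simp: field_simps)
  moreover have "(1 - \<alpha>) * \<omega> = \<rho> + \<delta>"
    using \<open>\<alpha> * \<omega> = F + \<delta>\<close> unfolding \<delta>_def by (simp add: algebra_simps)
  ultimately show ?thesis using \<open>0 < \<delta>\<close> that by auto
qed

definition basis_completion_in :: "(real^'n) set \<Rightarrow> (real^'n) set \<Rightarrow> nat \<Rightarrow> bool" where
  "basis_completion_in L V r \<longleftrightarrow> (\<exists>p\<in>L. \<exists>W. finite W \<and> card W \<le> r \<and>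
     (\<forall>w\<in>W. int_vec w \<and> (\<exists>s\<in>span V. p + w + s \<in> L)) \<and> spans_lattice (V \<union> W))"

text \<open>The chord \<open>z, z\<^sub>1\<close> of M supplies the new basis vector \<open>x\<^sub>0\<close>; the other vectors, chords of
  \<open>L'\<close> modulo \<open>span (insert x\<^sub>0 V)\<close>, are corrected by integer multiples of \<open>x\<^sub>0\<close> to become chords
  of \<open>L' + M\<close> modulo span V.\<close>
lemma basis_completion_in_sum:
  assumes M: "convex M" "z \<in> M" "z1 \<in> M" "z1 - z - x0 \<in> span V" and x0: "int_vec x0"
    and sum: "\<And>a m. a \<in> L' \<Longrightarrow> m \<in> M \<Longrightarrow> a + m \<in> L"
    and L': "basis_completion_in L' (insert x0 V) r"
  shows "basis_completion_in L V (Suc r)"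
proof -
  obtain p' W' where p': "p' \<in> L'" "finite W'" "card W' \<le> r"
    and W': "\<forall>w\<in>W'. int_vec w \<and> (\<exists>s\<in>span (insert x0 V). p' + w + s \<in> L')"
    and spans: "spans_lattice (insert x0 V \<union> W')"
    using L' unfolding basis_completion_in_def by blast
  have "\<forall>w\<in>W'. \<exists>k\<in>\<int>. \<exists>s\<in>span V. (p' + z) + (w + k *\<^sub>R x0) + s \<in> L"
    using W' lift_chord_into_sum[OF M sum] by blast
  then obtain k where k: "\<forall>w\<in>W'. k w \<in> \<int> \<and> (\<exists>s\<in>span V. (p' + z) + (w + k w *\<^sub>R x0) + s \<in> L)"
    by metis
  define W where "W = insert x0 ((\<lambda>w. w + k w *\<^sub>R x0) ` W')"
  have "card W \<le> Suc (card ((\<lambda>w. w + k w *\<^sub>R x0) ` W'))"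
    unfolding W_def by (rule card_insert_le_m1) auto
  also have "\<dots> \<le> Suc r" using card_image_le[OF p'(2), of "\<lambda>w. w + k w *\<^sub>R x0"] p'(3) by simp
  finally have "finite W \<and> card W \<le> Suc r" unfolding W_def using p'(2) by simp
  moreover have "(p' + z) + x0 + (z1 - z - x0) \<in> L" using sum[OF p'(1) M(3)] by simp
  then have "\<exists>s\<in>span V. (p' + z) + x0 + s \<in> L" using M(4) by blast
  then have "\<forall>w\<in>W. int_vec w \<and> (\<exists>s\<in>span V. (p' + z) + w + s \<in> L)"
    unfolding W_def using k W' x0 by (auto intro!: int_vec_add int_vec_scaleR)
  moreover have "spans_lattice (V \<union> W)" unfolding W_def using spans_lattice_shift[OF spans] k by auto
  moreover have "p' + z \<in> L" using sum[OF p'(1) M(2)] .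
  ultimately show ?thesis unfolding basis_completion_in_def by blast
qed

lemma basis_completion_in_wide_body:
  fixes L :: "(real^'n) set"
  assumes flat: "flatness_bound F TYPE('n)"
  shows "finite V \<Longrightarrow> \<forall>v\<in>V. int_vec v \<Longrightarrow> dim V + r = CARD('n) \<Longrightarrow> lattice_saturated V \<Longrightarrow>
    convex_body L \<Longrightarrow> real r * F < \<omega> \<Longrightarrow> orth_width_ge V L \<omega> \<Longrightarrow> basis_completion_in L V r"
proof (induction r arbitrary: V L \<omega>)
  case 0
  have "span V = UNIV" using 0(3) dim_eq_full[of V] by simp
  then have "spans_lattice (V \<union> {})"
    using 0(4) by (simp add: lattice_saturated_def spans_lattice_def)
  moreover obtain p where "p \<in> L" using 0(5) by (auto simp: convex_body_def)
  ultimately show ?case unfolding basis_completion_in_def by (intro bexI[of _ p] exI[of _ "{}"]) auto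
next
  case (Suc r)
  note V = Suc.prems(1,2)
  have F0: "0 \<le> F" by (rule flatness_bound_nonneg[OF flat])
  have "real r * F + F < \<omega>" using Suc.prems(6) by (simp add: algebra_simps)
  then obtain \<alpha> where \<alpha>: "0 < \<alpha>" "\<alpha> < 1" "F < \<alpha> * \<omega>" "real r * F < (1 - \<alpha>) * \<omega>"
    using split_width_budget[OF F0] F0 by (metis mult_nonneg_nonneg of_nat_0_le_iff)
  define M where "M = (*\<^sub>R) \<alpha> ` L"
  define L' where "L' = (*\<^sub>R) (1 - \<alpha>) ` L"
  have "convex_body M" unfolding M_def by (rule convex_body_scaleR[OF Suc.prems(5)])
  moreover have "orth_width_ge V M (\<alpha> * \<omega>)"
    unfolding M_def by (rule orth_width_ge_scaleR[OF Suc.prems(5) \<alpha>(1) Suc.prems(7)])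
  ultimately have M: "convex_body M" "convex M" "orth_width_ge V M (\<alpha> * \<omega>)"
    by (simp_all add: convex_body_def)
  have "span V \<noteq> UNIV" using Suc.prems(3) dim_eq_full[of V] by auto
  then obtain x z z' where xz: "int_vec x" "x \<notin> span V" "z \<in> M" "z' \<in> M" "z' - z - x \<in> span V"
    using lattice_chord[OF flat V _ M(1) \<alpha>(3) M(3)] by blast
  obtain x0 z1 where x0: "int_vec x0" "x0 \<notin> span V" "z1 \<in> M" "z1 - z - x0 \<in> span V"
    and prim: "\<And>y. int_vec y \<Longrightarrow> y \<in> span (insert x0 V) \<Longrightarrow> \<exists>j\<in>\<int>. y - j *\<^sub>R x0 \<in> span V"
    using primitive_lattice_chord[OF V xz(1,2) M(2) xz(3,4,5)] by blast
  have "dim (insert x0 V) + r = CARD('n)" using Suc.prems(3) x0(2) by (simp add: dim_insert)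
  moreover have "lattice_saturated (insert x0 V)"
    using lattice_saturated_insert[OF Suc.prems(4) x0(1) prim] .
  moreover have "convex_body L'" "orth_width_ge (insert x0 V) L' ((1 - \<alpha>) * \<omega>)"
    unfolding L'_def using Suc.prems(5,7) \<alpha>(2)
    by (auto intro: convex_body_scaleR orth_width_ge_insert orth_width_ge_scaleR)
  ultimately have "basis_completion_in L' (insert x0 V) r"
    using Suc.IH[of "insert x0 V" L' "(1 - \<alpha>) * \<omega>"] V x0(1) \<alpha>(4) by auto
  moreover have "a + m \<in> L" if "a \<in> L'" "m \<in> M" for a m
    using that \<alpha>(1,2) Suc.prems(5) unfolding L'_def M_def convex_body_def by (auto intro: convexD)
  ultimately show ?case using basis_completion_in_sum[OF M(2) xz(3) x0(3,4,1)] by blast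
qed

section \<open>Unimodular matrices\<close>

definition int_matrix :: "real^'m^'n \<Rightarrow> bool" where
  "int_matrix A \<longleftrightarrow> (\<forall>i j. A $ i $ j \<in> \<int>)"

lemma unimodular_matrix_iff: "unimodular_matrix A \<longleftrightarrow> int_matrix A \<and> (det A = 1 \<or> det A = -1)"
  by (simp add: unimodular_matrix_def int_matrix_def)

lemma det_Ints: "int_matrix A \<Longrightarrow> det (A::real^'n^'n) \<in> \<int>"
  unfolding det_def int_matrix_def by (intro Ints_sum Ints_mult Ints_prod) auto

lemma Ints_mult_eq_1D:
  assumes "(a::real) \<in> \<int>" "b \<in> \<int>" "a * b = 1"
  shows "a = 1 \<or> a = -1"
proof -
  obtain ka kb where "a = of_int ka" "b = of_int kb" using assms(1,2) by (auto elim!: Ints_cases)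
  with assms(3) have "ka * kb = 1" by (metis of_int_eq_1_iff of_int_mult)
  then show ?thesis using \<open>a = of_int ka\<close> zmult_eq_1_iff by auto
qed

lemma int_vec_matrix_vector_mult: "int_matrix A \<Longrightarrow> int_vec x \<Longrightarrow> int_vec (A *v x)"
  unfolding int_matrix_def int_vec_def matrix_vector_mult_def by (auto intro!: Ints_sum Ints_mult)

lemma int_matrix_mult: "int_matrix A \<Longrightarrow> int_matrix B \<Longrightarrow> int_matrix (A ** B)"
  unfolding int_matrix_def matrix_matrix_mult_def by (auto intro!: Ints_sum Ints_mult)

lemma unimodular_matrix_mult:
  "unimodular_matrix A \<Longrightarrow> unimodular_matrix B \<Longrightarrow> unimodular_matrix (A ** B)"
  unfolding unimodular_matrix_iff by (auto simp: det_mul int_matrix_mult)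

lemma unimodular_of_int_inverse:
  fixes A C :: "real^'n^'n"
  assumes A: "int_matrix A" and C: "int_matrix C" and AC: "A ** C = mat 1"
  shows "unimodular_matrix A" "unimodular_matrix C"
proof -
  have "det A * det C = 1" using AC by (metis det_I det_mul)
  then show "unimodular_matrix A" "unimodular_matrix C"
    unfolding unimodular_matrix_iff using A C Ints_mult_eq_1D det_Ints by (metis mult.commute)+
qed

lemma unimodular_inverse:
  fixes A :: "real^'n^'n"
  assumes "unimodular_matrix A"
  obtains C where "unimodular_matrix C" "C ** A = mat 1"
proof -
  have A: "int_matrix A" and dA: "det A = 1 \<or> det A = -1"
    using assms by (auto simp: unimodular_matrix_iff)
  then have "det A \<noteq> 0" by auto
  define C where "C = (\<chi> j k. det (\<chi> i j'. if j' = j then axis k 1 $ i else A $ i $ j') / det A :: real^'n^'n)"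
  have col: "A *v (\<chi> j. C $ j $ k) = axis k 1" for k
    using cramer[OF \<open>det A \<noteq> 0\<close>, of "\<chi> j. C $ j $ k" "axis k 1"] unfolding C_def by simp
  have "int_matrix C"
    unfolding int_matrix_def
  proof (intro allI)
    fix j k
    have "int_matrix (\<chi> i j'. if j' = j then axis k 1 $ i else A $ i $ j')"
      using A by (auto simp: int_matrix_def axis_def)
    then show "C $ j $ k \<in> \<int>" unfolding C_def using dA det_Ints by auto
  qed
  moreover have AC: "A ** C = mat 1"
    using col by (simp add: vec_eq_iff matrix_matrix_mult_def matrix_vector_mult_def mat_def axis_def)
  ultimately show ?thesis
    using unimodular_of_int_inverse(2)[OF A] matrix_left_right_inverse that by blast
qed

lemma int_span_columns:
  assumes "x \<in> int_span (range g)"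
  shows "\<exists>c. int_vec c \<and> x = (\<chi> i j. g j $ i :: real^'n^'n) *v c"
  using assms
proof (induction rule: int_span.induct)
  case int_span_0
  then show ?case by (intro exI[of _ 0]) auto
next
  case (int_span_base b)
  then obtain j where "b = g j" by auto
  moreover have "(\<chi> i j. g j $ i :: real^'n^'n) *v axis j 1 = g j"
    by (simp add: matrix_vector_mult_basis column_def)
  ultimately show ?case by (intro exI[of _ "axis j 1"]) auto
next
  case (int_span_diff x y)
  then obtain c1 c2 where "int_vec c1" "x = (\<chi> i j. g j $ i :: real^'n^'n) *v c1"
    "int_vec c2" "y = (\<chi> i j. g j $ i :: real^'n^'n) *v c2" by blast
  then show ?case
    by (intro exI[of _ "c1 - c2"]) (auto simp: int_vec_diff matrix_vector_mult_diff_distrib)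
qed

lemma unimodular_of_lattice_basis:
  fixes g :: "'n \<Rightarrow> real^'n"
  assumes spans: "spans_lattice (range g)" and g: "\<And>j. int_vec (g j)"
  shows "unimodular_matrix (\<chi> i j. g j $ i)"
proof -
  define A where "A = (\<chi> i j. g j $ i :: real^'n^'n)"
  have "\<exists>c. int_vec c \<and> axis k 1 = A *v c" for k
    unfolding A_def using spans by (intro int_span_columns) (simp add: spans_lattice_def)
  then obtain c where c: "\<And>k. int_vec (c k) \<and> axis k 1 = A *v c k" by metis
  define C where "C = (\<chi> j k. c k $ j :: real^'n^'n)"
  have "A ** C = mat 1"
  proof -
    have "(A ** C) $ i $ k = (A *v c k) $ i" for i k
      by (simp add: matrix_matrix_mult_def matrix_vector_mult_def C_def)
    then show ?thesis using c by (simp add: vec_eq_iff mat_def axis_def)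
  qed
  moreover have "int_matrix A" "int_matrix C"
    unfolding A_def C_def int_matrix_def using g c by (auto simp: int_vec_def)
  ultimately show ?thesis using unimodular_of_int_inverse(1) unfolding A_def by blast
qed

section \<open>Unimodular simplices in wide bodies\<close>

lemma std_simplex_image_subset:
  fixes A :: "real^'n^'m"
  assumes L: "convex L" and p: "p \<in> L" and edges: "\<And>i. p + A *v axis i 1 \<in> L"
  shows "(\<lambda>y. A *v y + p) ` std_simplex \<subseteq> L"
proof -
  define S where "S = insert (0::real^'n) {axis i 1 | i. True}"
  have "(\<lambda>y. A *v y + p) ` std_simplex = (+) p ` ((*v) A ` (convex hull S))"
    unfolding std_simplex_def S_def by (auto simp: image_image add.commute)
  also have "\<dots> = convex hull ((+) p ` (*v) A ` S)"
    by (simp add: convex_hull_linear_image matrix_vector_mul_linear convex_hull_translation)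
  also have "\<dots> \<subseteq> L"
    using p edges unfolding S_def by (intro hull_minimal L) auto
  finally show ?thesis .
qed

lemma unimodular_simplex_in_body:
  fixes L :: "(real^'n) set"
  assumes flat: "flatness_bound F TYPE('n)" and L: "convex_body L"
    and w: "real CARD('n) * F < lattice_width L"
  obtains A p where "unimodular_matrix A" "(\<lambda>y. A *v y + p) ` std_simplex \<subseteq> L"
proof -
  have "bounded L" "L \<noteq> {}" using L by (auto simp: convex_body_def compact_imp_bounded)
  then have wide: "orth_width_ge {} L (lattice_width L)"
    unfolding orth_width_ge_def by (auto intro: lattice_width_le_dir_width)
  have sat: "lattice_saturated ({} :: (real^'n) set)"
    by (simp add: lattice_saturated_def int_span_0)
  have "basis_completion_in L {} CARD('n)"
    by (rule basis_completion_in_wide_body[OF flat finite.emptyI _ _ sat L _ wide]) (use w in simp_all)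
  then obtain p W where p: "p \<in> L" and W: "finite W" "card W \<le> CARD('n)"
    and edges: "\<forall>w\<in>W. int_vec w \<and> p + w \<in> L" and spans: "spans_lattice W"
    unfolding basis_completion_in_def by auto
  have "Basis \<subseteq> span W"
    using spans by (auto simp: Basis_vec_def spans_lattice_def intro: int_span_subset_span)
  then have "UNIV \<subseteq> span W" by (metis span_Basis span_minimal subspace_span)
  then have "dim (UNIV :: (real^'n) set) \<le> card W" using W(1) by (rule dim_le_card)
  then have "card W = CARD('n)" using W(2) by (simp add: dim_UNIV)
  then obtain g where g: "bij_betw g (UNIV::'n set) W"
    using finite_same_card_bij[of "UNIV::'n set" W] W by auto
  then have "range g = W" by (simp add: bij_betw_def)
  define A where "A = (\<chi> i j. g j $ i :: real^'n^'n)"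
  have "unimodular_matrix A"
    unfolding A_def using spans edges \<open>range g = W\<close> by (intro unimodular_of_lattice_basis) auto
  moreover have "(\<lambda>y. A *v y + p) ` std_simplex \<subseteq> L"
  proof (rule std_simplex_image_subset[OF _ p])
    show "convex L" using L by (simp add: convex_body_def)
    show "p + A *v axis j 1 \<in> L" for j
      using edges \<open>range g = W\<close> unfolding A_def by (auto simp: matrix_vector_mult_basis column_def)
  qed
  ultimately show ?thesis by (rule that)
qed

lemma unimodular_scaled_simplex_in_body:
  fixes K :: "(real^'n) set"
  assumes flat: "flatness_bound F TYPE('n)" and K: "convex_body K" and c: "0 < c"
    and w: "c * real CARD('n) * F < lattice_width K"
  obtains A p where "unimodular_matrix A" "(\<lambda>y. A *v y + p) ` ((*\<^sub>R) c ` std_simplex) \<subseteq> K"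
proof -
  define L where "L = (*\<^sub>R) (1 / c) ` K"
  have L: "convex_body L" unfolding L_def by (rule convex_body_scaleR[OF K])
  have "real CARD('n) * F < (1 / c) * lattice_width K" using w c by (simp add: field_simps)
  also have "\<dots> \<le> lattice_width L" unfolding L_def using K c by (intro lattice_width_scaleR) auto
  finally obtain A p where A: "unimodular_matrix A" and Ap: "(\<lambda>y. A *v y + p) ` std_simplex \<subseteq> L"
    using unimodular_simplex_in_body[OF flat L] by blast
  have "A *v (c *\<^sub>R y) + c *\<^sub>R p = c *\<^sub>R (A *v y + p)" for y
    by (simp add: matrix_vector_mult_scaleR scaleR_add_right)
  then have "(\<lambda>y. A *v y + c *\<^sub>R p) ` ((*\<^sub>R) c ` std_simplex) = (*\<^sub>R) c ` (\<lambda>y. A *v y + p) ` std_simplex"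
    by (auto simp: image_image)
  also have "\<dots> \<subseteq> (*\<^sub>R) c ` L" using Ap by blast
  also have "\<dots> = K" unfolding L_def using c by (simp add: image_image)
  finally show ?thesis using A that by blast
qed

text \<open>Inside \<open>K/2\<close> there is some \<open>p + A(c\<Delta>)\<close>. The translate \<open>p + K/2\<close> is still wider than the
  flatness constant, so it contains a lattice point \<open>q = p + k\<close>, and \<open>q + A(c\<Delta>) \<subseteq> K/2 + K/2 = K\<close>.\<close>
lemma unimodular_integral_scaled_simplex_in_body:
  fixes K :: "(real^'n) set"
  assumes flat: "flatness_bound F TYPE('n)" and K: "convex_body K" and c: "1 \<le> c"
    and w: "2 * c * real CARD('n) * F < lattice_width K"
  obtains A q where "unimodular_matrix A" "int_vec q"
    "(\<lambda>y. A *v y + q) ` ((*\<^sub>R) c ` std_simplex) \<subseteq> K"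
proof -
  have F0: "0 \<le> F" by (rule flatness_bound_nonneg[OF flat])
  define K2 where "K2 = (*\<^sub>R) (1/2) ` K"
  have K2: "convex_body K2" unfolding K2_def by (rule convex_body_scaleR[OF K])
  have "c * real CARD('n) * F < (1/2) * lattice_width K" using w by simp
  also have "\<dots> \<le> lattice_width K2" unfolding K2_def using K by (intro lattice_width_scaleR) auto
  finally have w2: "c * real CARD('n) * F < lattice_width K2" .
  obtain A p where A: "unimodular_matrix A" and AK2: "(\<lambda>y. A *v y + p) ` ((*\<^sub>R) c ` std_simplex) \<subseteq> K2"
    using unimodular_scaled_simplex_in_body[OF flat K2 _ w2] c by auto
  have "1 * 1 \<le> c * real CARD('n)" by (rule mult_mono) (use c in \<open>auto simp: Suc_le_eq\<close>)
  then have "F \<le> c * real CARD('n) * F" using F0 mult_right_mono by fastforce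
  also have "\<dots> < lattice_width ((+) p ` K2)" using w2 lattice_width_translation[OF K2, of p] by linarith
  finally obtain q where "q \<in> (+) p ` K2" "int_vec q"
    using flatness_boundD[OF flat convex_body_translation[OF K2]] by blast
  then obtain k where k: "k \<in> K2" "q = p + k" by auto
  have "A *v y + q \<in> K" if "y \<in> (*\<^sub>R) c ` std_simplex" for y
  proof -
    have "A *v y + p \<in> K2" using AK2 that by blast
    with k(1) obtain a b where "a \<in> K" "b \<in> K" "A *v y + q = (1/2) *\<^sub>R a + (1/2) *\<^sub>R b"
      unfolding K2_def k(2) by (auto simp: algebra_simps)
    moreover have "convex K" using K by (simp add: convex_body_def)
    ultimately show ?thesis by (simp add: convexD)
  qed
  then show ?thesis using that A \<open>int_vec q\<close> by blast
qed

lemma copy_in_body_of_unimodular_image: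
  fixes A0 :: "real^'n^'n"
  assumes A0: "unimodular_matrix A0" and X: "X \<subseteq> (\<lambda>y. A0 *v y + b0) ` Y"
    and A: "unimodular_matrix A" and AK: "(\<lambda>y. A *v y + p) ` Y \<subseteq> K"
  obtains B where "unimodular_matrix B" "(\<lambda>x. B *v x + (p - B *v b0)) ` X \<subseteq> K"
proof -
  obtain C where C: "unimodular_matrix C" "C ** A0 = mat 1" using unimodular_inverse[OF A0] by blast
  define B where "B = A ** C"
  have "B *v x + (p - B *v b0) \<in> K" if "x \<in> X" for x
  proof -
    obtain y where y: "y \<in> Y" "x = A0 *v y + b0" using X \<open>x \<in> X\<close> by auto
    have "B *v x + (p - B *v b0) = A *v ((C ** A0) *v y) + p"
      unfolding y(2) B_def
      by (simp add: matrix_vector_mult_add_rdistrib matrix_vector_mul_assoc[symmetric] algebra_simps)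
    then show ?thesis using AK y(1) C(2) by auto
  qed
  moreover have "unimodular_matrix B" unfolding B_def using A C(1) by (rule unimodular_matrix_mult)
  ultimately show ?thesis using that by blast
qed

lemma R_copy_in_wide_body:
  fixes X K :: "(real^'n) set"
  assumes flat: "flatness_bound F TYPE('n)" and A0: "unimodular_matrix A0"
    and X: "X \<subseteq> (\<lambda>y. A0 *v y + b0) ` ((*\<^sub>R) c ` std_simplex)" and c: "0 < c"
    and K: "convex_body K" and w: "c * real CARD('n) * F < lattice_width K"
  shows "\<exists>Z. R_unimodular_copy X Z \<and> Z \<subseteq> K"
proof -
  obtain A p where "unimodular_matrix A" "(\<lambda>y. A *v y + p) ` ((*\<^sub>R) c ` std_simplex) \<subseteq> K"
    using unimodular_scaled_simplex_in_body[OF flat K c w] by blast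
  then obtain B where "unimodular_matrix B" "(\<lambda>x. B *v x + (p - B *v b0)) ` X \<subseteq> K"
    using copy_in_body_of_unimodular_image[OF A0 X] by blast
  then show ?thesis unfolding R_unimodular_copy_def by blast
qed

lemma copy_in_wide_body:
  fixes X K :: "(real^'n) set"
  assumes flat: "flatness_bound F TYPE('n)" and A0: "unimodular_matrix A0" and b0: "int_vec b0"
    and X: "X \<subseteq> (\<lambda>y. A0 *v y + b0) ` ((*\<^sub>R) c ` std_simplex)" and c: "1 \<le> c"
    and K: "convex_body K" and w: "2 * c * real CARD('n) * F < lattice_width K"
  shows "\<exists>Z. unimodular_copy X Z \<and> Z \<subseteq> K"
proof -
  obtain A q where "unimodular_matrix A" "int_vec q" "(\<lambda>y. A *v y + q) ` ((*\<^sub>R) c ` std_simplex) \<subseteq> K"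
    using unimodular_integral_scaled_simplex_in_body[OF flat K c w] by blast
  moreover obtain B where "unimodular_matrix B" "(\<lambda>x. B *v x + (q - B *v b0)) ` X \<subseteq> K"
    using copy_in_body_of_unimodular_image[OF A0 X] calculation by blast
  moreover have "int_vec (q - B *v b0)"
    using calculation b0 by (auto intro: int_vec_diff int_vec_matrix_vector_mult simp: unimodular_matrix_iff)
  ultimately show ?thesis unfolding unimodular_copy_def by blast
qed

lemma FltR_X_le:
  fixes X :: "(real^'n) set"
  assumes "\<And>K. convex_body K \<Longrightarrow> c < lattice_width K \<Longrightarrow> \<exists>Z. R_unimodular_copy X Z \<and> Z \<subseteq> K"
  shows "FltR_X X \<le> ereal c"
  unfolding FltR_X_def
proof (rule Sup_least)
  fix e assume "e \<in> {ereal (lattice_width K) |K. convex_body K \<and> \<not> (\<exists>Z. R_unimodular_copy X Z \<and> Z \<subseteq> K)}"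
  then obtain K where "e = ereal (lattice_width K)" "convex_body K" "\<not> (\<exists>Z. R_unimodular_copy X Z \<and> Z \<subseteq> K)"
    by blast
  then show "e \<le> ereal c" using assms by force
qed

lemma Flt_X_le:
  fixes X :: "(real^'n) set"
  assumes "\<And>K. convex_body K \<Longrightarrow> c < lattice_width K \<Longrightarrow> \<exists>Z. unimodular_copy X Z \<and> Z \<subseteq> K"
  shows "Flt_X X \<le> ereal c"
  unfolding Flt_X_def
proof (rule Sup_least)
  fix e assume "e \<in> {ereal (lattice_width K) |K. convex_body K \<and> \<not> (\<exists>Z. unimodular_copy X Z \<and> Z \<subseteq> K)}"
  then obtain K where "e = ereal (lattice_width K)" "convex_body K" "\<not> (\<exists>Z. unimodular_copy X Z \<and> Z \<subseteq> K)"
    by blast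
  then show "e \<le> ereal c" using assms by force
qed

theorem mainTheorem7:
  fixes X :: "(real^'n) set" and n :: nat
  assumes "n \<ge> 1"
    and "bounded X"
    and "\<exists>Z. unimodular_copy ((\<lambda>x. real n *\<^sub>R x) ` std_simplex) Z \<and> X \<subseteq> Z"
  shows "Flt_X X \<le> ereal (2 * real n * real CARD('n)) * Flt TYPE('n)
     \<and> FltR_X X \<le> ereal (real n * real CARD('n)) * Flt TYPE('n)"
proof -
  obtain A0 b0 where A0: "unimodular_matrix A0" "int_vec b0"
    and X: "X \<subseteq> (\<lambda>y. A0 *v y + b0) ` ((\<lambda>x. real n *\<^sub>R x) ` std_simplex)"
    using assms(3) unfolding unimodular_copy_def by blast
  have n: "1 \<le> real n" "0 < real n" using assms(1) by auto
  show ?thesis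
  proof (cases "Flt TYPE('n)")
    case (real F)
    note flat = flatness_bound_Flt[OF real]
    have "Flt_X X \<le> ereal (2 * real n * real CARD('n) * F)"
      by (rule Flt_X_le, rule copy_in_wide_body[OF flat A0 X n(1)])
    moreover have "FltR_X X \<le> ereal (real n * real CARD('n) * F)"
      by (rule FltR_X_le, rule R_copy_in_wide_body[OF flat A0(1) X n(2)])
    ultimately show ?thesis using real by simp
  next
    case PInf
    then show ?thesis using n by simp
  next
    case MInf
    then show ?thesis using Flt_nonneg[where 'n='n] by simp
  qed
qed

end
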